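(* Let $\mathcal{K}$ be a simplicial complex of dimension at most $2$ with non-negatively weighted edges, let $g=\operatorname{rank}\mathsf{H}_1(\mathcal{K})$ and $L=\operatorname{rank}\mathsf{Z}_1(\mathcal{K})$. Let $\mathcal{G}'$ be a set of $1$-cycles such that there exists a minimal cycle basis $\Gamma^*=\{\gamma^*_1,\dots,\gamma^*_L\}$ of the $1$-skeleton of $\mathcal{K}$ with the property that for each $1\le i\le L$ there is a subset $\Gamma_i\subseteq\mathcal{G}'$ with $\gamma^*_i=\sum_{\gamma\in\Gamma_i}\gamma$ and $\mathcal{S}(\gamma)\le 2\mathcal{S}(\gamma^*_i)$ for every $\gamma\in\Gamma_i$. Then there exists a minimal homology basis $\mathcal{C}^*=\{C^*_1,\dots,C^*_g\}$ of $\mathsf{H}_1(\mathcal{K})$ such that $\mathcal{G}'$ contains $g$ cycles $A_1,\dots,A_g$ with (i) $[A_1],\dots,[A_g]$ forming a homology basis, and (ii) $\mathcal{S}(A_i)\le 2\mathcal{S}(C^*_i)$ for $i=1,\dots,g$.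
   Context: All chains, cycles and homology are over $\mathbb{Z}_2$; sums of cycles are $\mathbb{Z}_2$-sums of edge sets. The size $\mathcal{S}(C)$ of a $1$-cycle is the total weight of its edges. A cycle basis of the $1$-skeleton is a set of $L$ cycles forming a basis of the cycle space $\mathsf{Z}_1$; it is minimal if its total size is smallest among all cycle bases. A homology basis is a set of $g$ cycles whose classes form a basis of $\mathsf{H}_1(\mathcal{K})$; it is minimal if its total size is smallest among all homology bases. *)

theory Defs
  imports Complex_Main
begin

definition simplicial_complex2 :: "'v set set \<Rightarrow> bool" where
  "simplicial_complex2 K \<longleftrightarrow> finite K \<and>
     (\<forall>s\<in>K. s \<noteq> {} \<and> finite s \<and> card s \<le> 3) \<and>
     (\<forall>s\<in>K. \<forall>t. t \<subseteq> s \<and> t \<noteq> {} \<longrightarrow> t \<in> K)"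

definition edges :: "'v set set \<Rightarrow> 'v set set" where
  "edges K = {s\<in>K. card s = 2}"

definition triangles :: "'v set set \<Rightarrow> 'v set set" where
  "triangles K = {s\<in>K. card s = 3}"

text \<open>Z2-sum of an indexed family of chains (chains = sets of edges):
  an edge is in the sum iff it lies in an odd number of the summands.\<close>
definition zsum :: "('i \<Rightarrow> 'a set) \<Rightarrow> 'i set \<Rightarrow> 'a set" where
  "zsum f I = {e. odd (card {i\<in>I. e \<in> f i})}"

definition symdiff :: "'a set \<Rightarrow> 'a set \<Rightarrow> 'a set" where
  "symdiff A B = (A - B) \<union> (B - A)"

definition cycles :: "'v set set \<Rightarrow> 'v set set set" where
  "cycles K = {C. C \<subseteq> edges K \<and> (\<forall>v. even (card {e\<in>C. v \<in> e}))}"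

definition tri_boundary :: "'v set \<Rightarrow> 'v set set" where
  "tri_boundary t = {e. e \<subseteq> t \<and> card e = 2}"

definition boundaries :: "'v set set \<Rightarrow> 'v set set set" where
  "boundaries K = {zsum tri_boundary T | T. T \<subseteq> triangles K}"

definition csize :: "('v set \<Rightarrow> real) \<Rightarrow> 'v set set \<Rightarrow> real" where
  "csize w C = (\<Sum>e\<in>C. w e)"

definition cycle_basis :: "'v set set \<Rightarrow> 'v set set list \<Rightarrow> bool" where
  "cycle_basis K bs \<longleftrightarrow> set bs \<subseteq> cycles K \<and>
     (\<forall>I\<subseteq>{..<length bs}. I \<noteq> {} \<longrightarrow> zsum ((!) bs) I \<noteq> {}) \<and>
     (\<forall>z\<in>cycles K. \<exists>I\<subseteq>{..<length bs}. zsum ((!) bs) I = z)"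

definition min_cycle_basis :: "'v set set \<Rightarrow> ('v set \<Rightarrow> real) \<Rightarrow> 'v set set list \<Rightarrow> bool" where
  "min_cycle_basis K w bs \<longleftrightarrow> cycle_basis K bs \<and>
     (\<forall>bs'. cycle_basis K bs' \<longrightarrow> (\<Sum>C\<leftarrow>bs. csize w C) \<le> (\<Sum>C\<leftarrow>bs'. csize w C))"

definition homology_basis :: "'v set set \<Rightarrow> 'v set set list \<Rightarrow> bool" where
  "homology_basis K bs \<longleftrightarrow> set bs \<subseteq> cycles K \<and>
     (\<forall>I\<subseteq>{..<length bs}. I \<noteq> {} \<longrightarrow> zsum ((!) bs) I \<notin> boundaries K) \<and>
     (\<forall>z\<in>cycles K. \<exists>I\<subseteq>{..<length bs}. symdiff z (zsum ((!) bs) I) \<in> boundaries K)"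

definition min_homology_basis :: "'v set set \<Rightarrow> ('v set \<Rightarrow> real) \<Rightarrow> 'v set set list \<Rightarrow> bool" where
  "min_homology_basis K w bs \<longleftrightarrow> homology_basis K bs \<and>
     (\<forall>bs'. homology_basis K bs' \<longrightarrow> (\<Sum>C\<leftarrow>bs. csize w C) \<le> (\<Sum>C\<leftarrow>bs'. csize w C))"

end

theory Submission
  imports Defs "HOL-Library.Z2" "HOL-Library.Function_Algebras"
begin

(*
  A minimal cycle basis is locally optimal: if a basis cycle gamma occurs in the expansion
  of a cycle z, then exchanging gamma for z yields another cycle basis, so S(gamma) <= S(z).
  With the hypothesis on G', every cycle z is therefore a sum of cycles of G' of size at
  most 2 S(z). Now list a minimal homology basis C_1, ..., C_g by increasing size and choose
  A_1, A_2, ... in G' greedily, with S(A_k) <= 2 S(C_k) and A_k independent of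
  A_1, ..., A_(k-1) and the boundaries. Such an A_k exists, for otherwise C_1, ..., C_k
  together with a basis of the boundaries would be an independent family lying in the span
  of a smaller one. The g independent classes obtained form a homology basis.
*)

section \<open>Linear algebra\<close>

context vector_space
begin

lemma span_exchange:
  assumes "b \<in> S" "a \<in> span S" "a \<notin> span (S - {b})"
  shows "span (insert a (S - {b})) = span S"
proof -
  have "a \<in> span (insert b (S - {b}))"
    using assms(1,2) by (simp add: insert_absorb)
  then have "b \<in> span (insert a (S - {b}))"
    using assms(3) by (rule in_span_insert)
  moreover have "S \<subseteq> insert b (S - {b})"
    by blast
  ultimately have "S \<subseteq> span (insert a (S - {b}))"
    by (meson insert_subset span_superset span_mono subset_trans)
  moreover have "insert a (S - {b}) \<subseteq> span S"
    using assms(2) span_superset by blast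
  ultimately show ?thesis
    unfolding span_eq by blast
qed

lemma span_eq_if_independent_card_eq:
  assumes "finite T" "independent S" "S \<subseteq> span T" "card S = card T"
  shows "span S = span T"
proof -
  have "x \<in> span S" if "x \<in> T" for x
  proof (rule ccontr)
    assume x: "x \<notin> span S"
    have "insert x S \<subseteq> span T"
      using assms(3) that by (simp add: span_base)
    then have "finite (insert x S) \<and> card (insert x S) \<le> card T"
      by (rule independent_span_bound[OF assms(1) independent_insertI[OF x assms(2)]])
    moreover have "x \<notin> S"
      using x span_base by blast
    ultimately have "card S < card T"
      using card_insert_disjoint by fastforce
    then show False
      using assms(4) by simp
  qed
  then have "T \<subseteq> span S" by blast
  with assms(3) show ?thesis
    by (simp only: span_eq)
qed

lemma add_notin_span_remove:
  assumes "independent S" "b \<in> S" "c \<in> span (S - {b})"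
  shows "b + c \<notin> span (S - {b})"
proof
  assume "b + c \<in> span (S - {b})"
  then have "b \<in> span (S - {b})"
    using span_diff[OF _ assms(3)] by fastforce
  then show False
    using assms(1,2) dependent_def by blast
qed

lemma exists_notin_span_if_card_less:
  assumes "finite S" "independent T" "T \<subseteq> span (A \<union> S)" "card S < card T"
  shows "\<exists>a\<in>A. a \<notin> span S"
proof (rule ccontr)
  assume "\<not> (\<exists>a\<in>A. a \<notin> span S)"
  then have "A \<union> S \<subseteq> span S"
    using span_superset by blast
  then have "T \<subseteq> span S"
    using assms(3) span_mono[of "A \<union> S" "span S"] by (simp add: span_span)
  then have "card T \<le> card S"
    using independent_span_bound[OF assms(1,2)] by blast
  with assms(4) show False
    by simp
qed

lemma greedy_independent_selection:
  assumes cs: "distinct (cs @ bs)" "independent (set (cs @ bs))"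
    and mono: "\<And>i j. i \<le> j \<Longrightarrow> j < length cs \<Longrightarrow> G i \<subseteq> G j"
    and spanned: "\<And>i. i < length cs \<Longrightarrow> cs ! i \<in> span (G i)"
  shows "\<exists>as. length as = length cs \<and> distinct (as @ bs) \<and> independent (set (as @ bs)) \<and>
    (\<forall>i<length cs. as ! i \<in> G i)"
proof -
  have "\<exists>as. length as = k \<and> distinct (as @ bs) \<and> independent (set (as @ bs)) \<and> (\<forall>i<k. as ! i \<in> G i)"
    if "k \<le> length cs" for k
    using that
  proof (induction k)
    case 0
    show ?case
      using cs independent_mono[OF cs(2)] by (intro exI[of _ "[]"]) auto
  next
    case (Suc k)
    then obtain as where as: "length as = k" "distinct (as @ bs)" "independent (set (as @ bs))"
      "\<forall>i<k. as ! i \<in> G i"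
      by auto
    let ?T = "set (take (Suc k) cs @ bs)"
    have k: "k < length cs"
      using Suc.prems by simp
    have "cs ! j \<in> span (G k \<union> set (as @ bs))" if "j \<le> k" for j
      using spanned[of j] mono[OF that k] that k span_mono[of "G j" "G k \<union> set (as @ bs)"] by auto
    then have "?T \<subseteq> span (G k \<union> set (as @ bs))"
      using span_superset[of "G k \<union> set (as @ bs)"] by (auto simp: in_set_conv_nth)
    moreover have "independent ?T"
      using set_take_subset[of "Suc k" cs] by (intro independent_mono[OF cs(2)]) auto
    moreover have "distinct (take (Suc k) cs @ bs)"
      using cs(1) set_take_subset[of "Suc k" cs] by auto
    then have "card (set (as @ bs)) < card ?T"
      using distinct_card[OF as(2)] distinct_card[of "take (Suc k) cs @ bs"] as(1) k by simp
    ultimately obtain a where a: "a \<in> G k" "a \<notin> span (set (as @ bs))"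
      using exists_notin_span_if_card_less[of "set (as @ bs)" ?T "G k"] by blast
    have "a \<notin> set (as @ bs)"
      using a(2) span_superset[of "set (as @ bs)"] by blast
    then have "distinct ((as @ [a]) @ bs)" "independent (set ((as @ [a]) @ bs))"
      using as(2,3) independent_insertI[OF a(2) as(3)] by (auto simp: insert_commute)
    moreover have "\<forall>i<Suc k. (as @ [a]) ! i \<in> G i"
      using as(1,4) a(1) by (auto simp: nth_append less_Suc_eq)
    ultimately show ?case
      using as(1) by (intro exI[of _ "as @ [a]"]) auto
  qed
  then show ?thesis
    by blast
qed

end

section \<open>The vector space of chains over Z2\<close>

definition scale_bit :: "bit \<Rightarrow> ('a \<Rightarrow> bit) \<Rightarrow> 'a \<Rightarrow> bit" where
  "scale_bit c f = (\<lambda>x. c * f x)"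

interpretation bv: vector_space "scale_bit :: bit \<Rightarrow> ('a \<Rightarrow> bit) \<Rightarrow> 'a \<Rightarrow> bit"
  by unfold_locales (auto simp: scale_bit_def fun_eq_iff algebra_simps)

lemma scale_bit_eq: "scale_bit c f = (if c = 1 then f else 0)"
  by (cases c) (auto simp: scale_bit_def fun_eq_iff)

lemma add_self_bit_fun [simp]: "(f :: 'a \<Rightarrow> bit) + f = 0"
  by (simp add: fun_eq_iff)

lemma eq_add_iff_add_eq_bit_fun: "(v :: 'a \<Rightarrow> bit) = x + y \<longleftrightarrow> v + x = y"
proof
  assume "v = x + y"
  then have "v + x = y + (x + x)"
    by (simp only: add_ac)
  then show "v + x = y"
    by simp
next
  assume "v + x = y"
  then have "x + y = v + (x + x)"
    by (simp only: flip: \<open>v + x = y\<close>) (simp only: add_ac)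
  then show "v = x + y"
    by simp
qed

lemma add_eq_0_iff_eq_bit_fun: "(f :: 'a \<Rightarrow> bit) + g = 0 \<longleftrightarrow> f = g"
  using eq_add_iff_add_eq_bit_fun[of f g 0] by simp

lemma sum_scale_bit:
  "finite S \<Longrightarrow> (\<Sum>v\<in>S. scale_bit (u v) v) = \<Sum>{v\<in>S. u v = 1}"
  by (simp add: scale_bit_eq sum.If_cases Int_def conj_commute)

lemma sum_add_sum_bit_fun:
  fixes h :: "'i \<Rightarrow> 'a \<Rightarrow> bit"
  assumes "finite A" "finite B"
  shows "sum h A + sum h B = sum h ((A - B) \<union> (B - A))"
proof -
  have "sum h A = sum h (A - B) + sum h (A \<inter> B)" "sum h B = sum h (B - A) + sum h (A \<inter> B)"
    using assms by (metis Diff_Diff_Int Diff_subset sum.subset_diff inf_commute add.commute)+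
  then have "sum h A + sum h B = sum h (A - B) + sum h (B - A)"
    by (simp add: algebra_simps)
  also have "\<dots> = sum h ((A - B) \<union> (B - A))"
    using assms by (simp add: sum.union_disjoint Diff_Int_distrib2 Int_commute)
  finally show ?thesis .
qed

lemma bv_span_image_eq_subset_sums:
  fixes h :: "'i \<Rightarrow> 'a \<Rightarrow> bit"
  assumes "finite I"
  shows "bv.span (h ` I) = {sum h J | J. J \<subseteq> I}"
proof (rule bv.span_subspace)
  show "h ` I \<subseteq> {sum h J | J. J \<subseteq> I}"
    by (force intro: exI[of _ "{i}" for i])
  show "{sum h J | J. J \<subseteq> I} \<subseteq> bv.span (h ` I)"
  proof clarify
    fix J assume "J \<subseteq> I"
    then show "sum h J \<in> bv.span (h ` I)"
      by (intro bv.span_sum) (auto intro: bv.span_base)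
  qed
  show "bv.subspace {sum h J | J. J \<subseteq> I}"
    unfolding bv.subspace_def
  proof (intro conjI ballI allI)
    show "0 \<in> {sum h J | J. J \<subseteq> I}"
      by (auto intro: exI[of _ "{}"])
  next
    fix x y assume "x \<in> {sum h J | J. J \<subseteq> I}" "y \<in> {sum h J | J. J \<subseteq> I}"
    then obtain A B where "A \<subseteq> I" "B \<subseteq> I" "x = sum h A" "y = sum h B"
      by blast
    moreover have "finite A" "finite B"
      using calculation(1,2) assms finite_subset by blast+
    ultimately show "x + y \<in> {sum h J | J. J \<subseteq> I}"
      using sum_add_sum_bit_fun[of A B h] by blast
  next
    fix c x assume "x \<in> {sum h J | J. J \<subseteq> I}"
    then show "scale_bit c x \<in> {sum h J | J. J \<subseteq> I}"
      by (auto simp: scale_bit_eq intro: exI[of _ "{}"])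
  qed
qed

lemma bv_independent_iff_subset_sums:
  fixes S :: "('a \<Rightarrow> bit) set"
  assumes "finite S"
  shows "bv.independent S \<longleftrightarrow> (\<forall>T\<subseteq>S. T \<noteq> {} \<longrightarrow> \<Sum> T \<noteq> 0)"
proof -
  have "bv.dependent S \<longleftrightarrow> (\<exists>u. (\<exists>v\<in>S. u v = (1::bit)) \<and> \<Sum> {v\<in>S. u v = 1} = 0)"
    using assms by (simp add: bv.dependent_finite sum_scale_bit)
  also have "\<dots> \<longleftrightarrow> (\<exists>T\<subseteq>S. T \<noteq> {} \<and> \<Sum> T = 0)"
  proof
    assume "\<exists>u. (\<exists>v\<in>S. u v = (1::bit)) \<and> \<Sum> {v\<in>S. u v = 1} = 0"
    then obtain u v where "v \<in> S" "u v = (1::bit)" "\<Sum> {v\<in>S. u v = 1} = 0"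
      by blast
    then show "\<exists>T\<subseteq>S. T \<noteq> {} \<and> \<Sum> T = 0"
      by (intro exI[of _ "{v\<in>S. u v = 1}"]) auto
  next
    assume "\<exists>T\<subseteq>S. T \<noteq> {} \<and> \<Sum> T = 0"
    then obtain T where T: "T \<subseteq> S" "T \<noteq> {}" "\<Sum> T = 0"
      by blast
    then have "{v\<in>S. of_bool (v \<in> T) = (1::bit)} = T"
      by auto
    then show "\<exists>u. (\<exists>v\<in>S. u v = (1::bit)) \<and> \<Sum> {v\<in>S. u v = 1} = 0"
      using T by (intro exI[of _ "\<lambda>v. of_bool (v \<in> T)"]) auto
  qed
  finally show ?thesis
    by blast
qed

text \<open>The classes of \<open>vs\<close> form a basis of \<open>V\<close> modulo \<open>W\<close>: cycle bases (\<open>W = 0\<close>) and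
  homology bases (\<open>W\<close> the boundaries) are the two instances.\<close>

definition basis_modulo :: "('a \<Rightarrow> bit) set \<Rightarrow> ('a \<Rightarrow> bit) set \<Rightarrow> ('a \<Rightarrow> bit) list \<Rightarrow> bool" where
  "basis_modulo W V vs \<longleftrightarrow> set vs \<subseteq> V \<and>
     (\<forall>I\<subseteq>{..<length vs}. I \<noteq> {} \<longrightarrow> (\<Sum>i\<in>I. vs ! i) \<notin> W) \<and>
     (\<forall>v\<in>V. \<exists>I\<subseteq>{..<length vs}. v + (\<Sum>i\<in>I. vs ! i) \<in> W)"

lemma sum_nth_eq_Sum_image:
  assumes "distinct xs" "I \<subseteq> {..<length xs}"
  shows "(\<Sum>i\<in>I. xs ! i) = \<Sum>((!) xs ` I)"
proof -
  have "inj_on ((!) xs) I"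
    using assms by (intro inj_on_nth) auto
  then show ?thesis
    by (simp add: sum.reindex)
qed

lemma distinct_if_subset_sums_notin_span:
  fixes vs bs :: "('a \<Rightarrow> bit) list"
  assumes bs: "distinct bs"
    and sums: "\<forall>I\<subseteq>{..<length vs}. I \<noteq> {} \<longrightarrow> (\<Sum>i\<in>I. vs ! i) \<notin> bv.span (set bs)"
  shows "distinct (vs @ bs)"
proof -
  have "distinct vs"
    unfolding distinct_conv_nth
  proof (intro allI impI notI)
    fix i j assume ij: "i < length vs" "j < length vs" "i \<noteq> j" "vs ! i = vs ! j"
    then have "(\<Sum>k\<in>{i, j}. vs ! k) = 0"
      by simp
    then show False
      using sums ij by (metis bv.span_zero empty_not_insert empty_subsetI insert_subset lessThan_iff)
  qed
  moreover have "set vs \<inter> set bs = {}"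
  proof (rule ccontr)
    assume "set vs \<inter> set bs \<noteq> {}"
    then obtain i where "i < length vs" "vs ! i \<in> set bs"
      by (metis disjoint_iff in_set_conv_nth)
    then show False
      using sums[rule_format, of "{i}"] bv.span_base by auto
  qed
  ultimately show ?thesis
    using bs by simp
qed

lemma independent_if_subset_sums_notin_span:
  fixes vs bs :: "('a \<Rightarrow> bit) list"
  assumes distinct: "distinct (vs @ bs)" and bs: "bv.independent (set bs)"
    and sums: "\<forall>I\<subseteq>{..<length vs}. I \<noteq> {} \<longrightarrow> (\<Sum>i\<in>I. vs ! i) \<notin> bv.span (set bs)"
  shows "bv.independent (set (vs @ bs))"
  unfolding bv_independent_iff_subset_sums[OF finite_set]
proof (intro allI impI notI)
  fix T assume T: "T \<subseteq> set (vs @ bs)" "T \<noteq> {}" "\<Sum>T = 0"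
  define I where "I = {i. i < length vs \<and> vs ! i \<in> T}"
  have I: "I \<subseteq> {..<length vs}"
    by (auto simp: I_def)
  have TI: "(!) vs ` I = T \<inter> set vs"
    by (auto simp: I_def in_set_conv_nth)
  have "(\<Sum>i\<in>I. vs ! i) = \<Sum>((!) vs ` I)"
    using distinct I by (simp add: sum_nth_eq_Sum_image)
  also have "\<dots> = \<Sum>(T \<inter> set vs)"
    by (simp only: TI)
  also have "\<Sum>(T \<inter> set vs) = \<Sum>(T \<inter> set bs)"
  proof -
    have "\<Sum>(T \<inter> set vs) + \<Sum>(T \<inter> set bs) = \<Sum>((T \<inter> set vs) \<union> (T \<inter> set bs))"
      using distinct by (intro sum.union_disjoint[symmetric]) auto
    also have "(T \<inter> set vs) \<union> (T \<inter> set bs) = T"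
      using T(1) by auto
    finally show ?thesis
      using T(3) by (simp only: add_eq_0_iff_eq_bit_fun)
  qed
  finally have "(\<Sum>i\<in>I. vs ! i) \<in> bv.span (set bs)"
    by (auto intro: bv.span_sum bv.span_base)
  then have "I = {}"
    using sums I by blast
  then have "T \<subseteq> set bs"
    using T(1) TI by auto
  then show False
    using T(2,3) bs bv_independent_iff_subset_sums[of "set bs"] by blast
qed

lemma subset_sums_notin_span_if_independent:
  fixes vs bs :: "('a \<Rightarrow> bit) list"
  assumes distinct: "distinct (vs @ bs)" and indep: "bv.independent (set (vs @ bs))"
    and I: "I \<subseteq> {..<length vs}" "I \<noteq> {}"
  shows "(\<Sum>i\<in>I. vs ! i) \<notin> bv.span (set bs)"
proof
  assume "(\<Sum>i\<in>I. vs ! i) \<in> bv.span (set bs)"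
  then obtain J where J: "J \<subseteq> set bs" "(\<Sum>i\<in>I. vs ! i) = \<Sum>J"
    using bv_span_image_eq_subset_sums[of "set bs" "\<lambda>x. x"] by auto
  have Iv: "(!) vs ` I \<subseteq> set vs"
    using I(1) by auto
  let ?T = "(!) vs ` I \<union> J"
  have "\<Sum>?T = \<Sum>((!) vs ` I) + \<Sum>J"
    using Iv J(1) distinct by (intro sum.union_disjoint) (auto intro: finite_subset)
  also have "\<Sum>((!) vs ` I) = \<Sum>J"
    using J(2) distinct I(1) by (simp add: sum_nth_eq_Sum_image)
  finally have "\<Sum>?T = 0"
    by (simp only: add_self_bit_fun)
  moreover have "?T \<subseteq> set (vs @ bs)" "?T \<noteq> {}"
    using Iv I(2) J(1) by auto
  ultimately show False
    using indep bv_independent_iff_subset_sums[OF finite_set] by blast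
qed

lemma subset_sums_notin_span_iff:
  fixes vs bs :: "('a \<Rightarrow> bit) list"
  assumes "distinct bs" "bv.independent (set bs)"
  shows "(\<forall>I\<subseteq>{..<length vs}. I \<noteq> {} \<longrightarrow> (\<Sum>i\<in>I. vs ! i) \<notin> bv.span (set bs)) \<longleftrightarrow>
    distinct (vs @ bs) \<and> bv.independent (set (vs @ bs))"
  using assms distinct_if_subset_sums_notin_span independent_if_subset_sums_notin_span
    subset_sums_notin_span_if_independent by metis

lemma subset_sums_span_modulo_iff:
  fixes vs :: "('a \<Rightarrow> bit) list"
  shows "(\<forall>v\<in>V. \<exists>I\<subseteq>{..<length vs}. v + (\<Sum>i\<in>I. vs ! i) \<in> bv.span B) \<longleftrightarrow>
    V \<subseteq> bv.span (set vs \<union> B)"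
proof -
  have "(!) vs ` {..<length vs} = set vs"
    by (auto simp: in_set_conv_nth)
  then have "bv.span (set vs) = {\<Sum>i\<in>I. vs ! i | I. I \<subseteq> {..<length vs}}"
    using bv_span_image_eq_subset_sums[of "{..<length vs}" "(!) vs"] by simp
  then have "v \<in> bv.span (set vs \<union> B) \<longleftrightarrow> (\<exists>I\<subseteq>{..<length vs}. v + (\<Sum>i\<in>I. vs ! i) \<in> bv.span B)"
    for v
    unfolding bv.span_Un by (auto simp: eq_add_iff_add_eq_bit_fun)
  then show ?thesis
    by blast
qed

lemma basis_modulo_span_iff:
  fixes vs bs :: "('a \<Rightarrow> bit) list"
  assumes "distinct bs" "bv.independent (set bs)"
  shows "basis_modulo (bv.span (set bs)) V vs \<longleftrightarrow>
    set vs \<subseteq> V \<and> distinct (vs @ bs) \<and> bv.independent (set (vs @ bs)) \<and>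
    V \<subseteq> bv.span (set (vs @ bs))"
  unfolding basis_modulo_def subset_sums_notin_span_iff[OF assms] subset_sums_span_modulo_iff
  by auto

text \<open>Edge sets are identified with their indicator vectors.\<close>

definition chi :: "'a set \<Rightarrow> 'a \<Rightarrow> bit" where
  "chi A = (\<lambda>e. of_bool (e \<in> A))"

lemma inj_chi: "inj chi"
  by (rule injI) (auto simp: chi_def fun_eq_iff of_bool_eq_iff)

lemma chi_empty [simp]: "chi {} = 0"
  by (simp add: chi_def fun_eq_iff)

lemma chi_symdiff: "chi (symdiff A B) = chi A + chi B"
  by (auto simp: chi_def fun_eq_iff symdiff_def)

lemma symdiff_eq_empty_iff: "symdiff A B = {} \<longleftrightarrow> A = B"
  by (auto simp: symdiff_def)

lemma zsum_empty [simp]: "zsum f {} = {}"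
  by (simp add: zsum_def)

lemma zsum_insert:
  assumes "finite I" "i \<notin> I"
  shows "zsum f (insert i I) = symdiff (f i) (zsum f I)"
proof -
  have "{j \<in> insert i I. e \<in> f j} = (if e \<in> f i then insert i {j\<in>I. e \<in> f j} else {j\<in>I. e \<in> f j})"
    for e by auto
  then show ?thesis
    using assms by (auto simp: zsum_def symdiff_def)
qed

lemma chi_zsum: "finite I \<Longrightarrow> chi (zsum f I) = (\<Sum>i\<in>I. chi (f i))"
  by (induction I rule: finite_induct) (simp_all add: zsum_insert chi_symdiff)

lemma sum_map_chi_nth:
  assumes "I \<subseteq> {..<length xs}"
  shows "(\<Sum>i\<in>I. map chi xs ! i) = chi (zsum ((!) xs) I)"
proof -
  have "finite I"
    using assms finite_subset by blast
  have "(\<Sum>i\<in>I. map chi xs ! i) = (\<Sum>i\<in>I. chi (xs ! i))"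
    using assms by (intro sum.cong) auto
  with \<open>finite I\<close> show ?thesis
    by (simp add: chi_zsum)
qed

lemma basis_modulo_map_chi:
  "basis_modulo (chi ` P) (chi ` C) (map chi xs) \<longleftrightarrow> set xs \<subseteq> C \<and>
    (\<forall>I\<subseteq>{..<length xs}. I \<noteq> {} \<longrightarrow> zsum ((!) xs) I \<notin> P) \<and>
    (\<forall>z\<in>C. \<exists>I\<subseteq>{..<length xs}. symdiff z (zsum ((!) xs) I) \<in> P)"
proof -
  have sub: "set (map chi xs) \<subseteq> chi ` C \<longleftrightarrow> set xs \<subseteq> C"
    by (simp add: inj_image_subset_iff[OF inj_chi])
  have "(\<Sum>i\<in>I. map chi xs ! i) \<notin> chi ` P \<longleftrightarrow> zsum ((!) xs) I \<notin> P"
    if "I \<subseteq> {..<length xs}" for I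
    using that by (simp add: sum_map_chi_nth inj_image_mem_iff[OF inj_chi])
  then have indeps: "(\<forall>I\<subseteq>{..<length xs}. I \<noteq> {} \<longrightarrow> (\<Sum>i\<in>I. map chi xs ! i) \<notin> chi ` P) \<longleftrightarrow>
      (\<forall>I\<subseteq>{..<length xs}. I \<noteq> {} \<longrightarrow> zsum ((!) xs) I \<notin> P)"
    by (simp cong: imp_cong)
  have "chi z + (\<Sum>i\<in>I. map chi xs ! i) \<in> chi ` P \<longleftrightarrow> symdiff z (zsum ((!) xs) I) \<in> P"
    if "I \<subseteq> {..<length xs}" for I z
    using that by (simp add: sum_map_chi_nth inj_image_mem_iff[OF inj_chi] flip: chi_symdiff)
  then have "(\<exists>I\<subseteq>{..<length xs}. chi z + (\<Sum>i\<in>I. map chi xs ! i) \<in> chi ` P) \<longleftrightarrow>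
      (\<exists>I\<subseteq>{..<length xs}. symdiff z (zsum ((!) xs) I) \<in> P)" for z
    by (simp cong: conj_cong)
  then have spans: "(\<forall>v\<in>chi ` C. \<exists>I\<subseteq>{..<length xs}. v + (\<Sum>i\<in>I. map chi xs ! i) \<in> chi ` P) \<longleftrightarrow>
      (\<forall>z\<in>C. \<exists>I\<subseteq>{..<length xs}. symdiff z (zsum ((!) xs) I) \<in> P)"
    unfolding Ball_image_comp comp_def by (rule ball_cong[OF refl])
  show ?thesis
    unfolding basis_modulo_def length_map sub indeps spans ..
qed

lemma cycle_basis_eq_basis_modulo:
  fixes K :: "'v set set"
  shows "cycle_basis K xs \<longleftrightarrow> basis_modulo (bv.span (set [])) (chi ` cycles K) (map chi xs)"
proof -
  have empty: "bv.span (set []) = chi ` {{} :: 'v set set}"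
    by simp
  show ?thesis
    unfolding empty cycle_basis_def basis_modulo_map_chi by (simp add: symdiff_eq_empty_iff) (metis (no_types, lifting))
qed

lemma homology_basis_eq_basis_modulo:
  "homology_basis K xs \<longleftrightarrow> basis_modulo (chi ` boundaries K) (chi ` cycles K) (map chi xs)"
  unfolding basis_modulo_map_chi homology_basis_def ..

lemma cycle_basis_iff:
  "cycle_basis K xs \<longleftrightarrow> set xs \<subseteq> cycles K \<and> distinct xs \<and>
    bv.independent (chi ` set xs) \<and> chi ` cycles K \<subseteq> bv.span (chi ` set xs)"
  using basis_modulo_span_iff[of "[]" "chi ` cycles K" "map chi xs"]
  by (simp add: cycle_basis_eq_basis_modulo inj_image_subset_iff[OF inj_chi] distinct_map
      inj_on_subset[OF inj_chi] bv.independent_empty)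

lemma chi_boundaries_eq_span:
  assumes "finite (triangles K)"
  shows "chi ` boundaries K = bv.span ((\<lambda>t. chi (tri_boundary t)) ` triangles K)"
proof -
  have sums: "chi (zsum tri_boundary T) = (\<Sum>t\<in>T. chi (tri_boundary t))" if "T \<subseteq> triangles K" for T
    using that assms by (simp add: chi_zsum finite_subset)
  have "chi ` boundaries K = {chi (zsum tri_boundary T) | T. T \<subseteq> triangles K}"
    unfolding boundaries_def by blast
  also have "\<dots> = {\<Sum>t\<in>T. chi (tri_boundary t) | T. T \<subseteq> triangles K}"
    using sums by (intro Collect_cong) metis
  also have "\<dots> = bv.span ((\<lambda>t. chi (tri_boundary t)) ` triangles K)"
    by (rule bv_span_image_eq_subset_sums[OF assms, symmetric])
  finally show ?thesis .
qed

lemma boundary_basis_exists: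
  assumes "finite (triangles K)"
  obtains bs where "distinct bs" "bv.independent (set bs)" "bv.span (set bs) = chi ` boundaries K"
proof -
  let ?G = "(\<lambda>t. chi (tri_boundary t)) ` triangles K"
  obtain B where B: "B \<subseteq> ?G" "bv.independent B" "?G \<subseteq> bv.span B"
    by (rule bv.maximal_independent_subset_extend[of "{}" ?G]) (auto simp: bv.independent_empty)
  have "finite B"
    using B(1) assms finite_subset by blast
  then obtain bs where "set bs = B" "distinct bs"
    using finite_distinct_list by blast
  moreover have "bv.span B = chi ` boundaries K"
    unfolding chi_boundaries_eq_span[OF assms] bv.span_eq using B(1,3) bv.span_superset by blast
  ultimately show ?thesis
    using that B(2) by blast
qed

section \<open>Minimal cycle bases\<close>

lemma min_cycle_basis_exchange:
  assumes mcb: "min_cycle_basis K w \<Gamma>" and z: "z \<in> cycles K" and \<gamma>: "\<gamma> \<in> set \<Gamma>"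
    and notin: "chi z \<notin> bv.span (chi ` (set \<Gamma> - {\<gamma>}))"
  shows "csize w \<gamma> \<le> csize w z"
proof -
  let ?R = "set \<Gamma> - {\<gamma>}"
  have basis: "set \<Gamma> \<subseteq> cycles K" "distinct \<Gamma>" "bv.independent (chi ` set \<Gamma>)"
    "chi ` cycles K \<subseteq> bv.span (chi ` set \<Gamma>)"
    using mcb by (simp_all add: min_cycle_basis_def cycle_basis_iff)
  obtain i where i: "i < length \<Gamma>" "\<Gamma> ! i = \<gamma>"
    using \<gamma> by (metis in_set_conv_nth)
  define \<Gamma>' where "\<Gamma>' = \<Gamma>[i := z]"
  have "z \<notin> ?R"
    using notin bv.span_base[of "chi z" "chi ` ?R"] by blast
  then have set': "set \<Gamma>' = insert z ?R" and "distinct \<Gamma>'"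
    using basis(2) i by (auto simp: \<Gamma>'_def set_update_distinct distinct_list_update)
  have chi_R: "chi ` ?R = chi ` set \<Gamma> - {chi \<gamma>}"
    by (simp add: image_set_diff[OF inj_chi])
  have span': "bv.span (chi ` set \<Gamma>') = bv.span (chi ` set \<Gamma>)"
    unfolding set' image_insert chi_R
    using \<gamma> z basis(4) notin[unfolded chi_R] by (intro bv.span_exchange) auto
  have indep': "bv.independent (chi ` set \<Gamma>')"
    unfolding set' image_insert
    by (intro bv.independent_insertI[OF notin] bv.independent_mono[OF basis(3)]) auto
  have "set \<Gamma>' \<subseteq> cycles K"
    using set' z basis(1) by auto
  then have "cycle_basis K \<Gamma>'"
    unfolding cycle_basis_iff span' using \<open>distinct \<Gamma>'\<close> indep' basis(4) by (intro conjI)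
  then have "(\<Sum>C\<leftarrow>\<Gamma>. csize w C) \<le> (\<Sum>C\<leftarrow>\<Gamma>'. csize w C)"
    using mcb unfolding min_cycle_basis_def by blast
  moreover have "(\<Sum>C\<leftarrow>\<Gamma>. csize w C) = csize w \<gamma> + sum (csize w) ?R"
    using basis(2) \<gamma> by (simp add: sum_list_distinct_conv_sum_set sum.remove)
  moreover have "(\<Sum>C\<leftarrow>\<Gamma>'. csize w C) = csize w z + sum (csize w) ?R"
    using \<open>distinct \<Gamma>'\<close> \<open>z \<notin> ?R\<close> by (simp add: sum_list_distinct_conv_sum_set set')
  ultimately show ?thesis
    by simp
qed

lemma min_cycle_basis_summand_le:
  assumes mcb: "min_cycle_basis K w \<Gamma>" and z: "z \<in> cycles K"
    and Y: "Y \<subseteq> set \<Gamma>" "chi z = (\<Sum>\<delta>\<in>Y. chi \<delta>)" and \<gamma>: "\<gamma> \<in> Y"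
  shows "csize w \<gamma> \<le> csize w z"
proof (rule min_cycle_basis_exchange[OF mcb z])
  show \<gamma>\<Gamma>: "\<gamma> \<in> set \<Gamma>"
    using \<gamma> Y(1) by blast
  have indep: "bv.independent (chi ` set \<Gamma>)"
    using mcb by (simp add: min_cycle_basis_def cycle_basis_iff)
  have "finite Y"
    using Y(1) finite_subset by blast
  then have "chi z = chi \<gamma> + (\<Sum>\<delta>\<in>Y - {\<gamma>}. chi \<delta>)"
    using Y(2) \<gamma> by (simp add: sum.remove)
  moreover have "(\<Sum>\<delta>\<in>Y - {\<gamma>}. chi \<delta>) \<in> bv.span (chi ` set \<Gamma> - {chi \<gamma>})"
    using Y(1) inj_chi by (intro bv.span_sum bv.span_base) (auto dest: injD)
  ultimately show "chi z \<notin> bv.span (chi ` (set \<Gamma> - {\<gamma>}))"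
    using bv.add_notin_span_remove[OF indep] \<gamma>\<Gamma> by (simp add: image_set_diff[OF inj_chi])
qed

lemma cycle_in_span_of_short_cycles:
  assumes mcb: "min_cycle_basis K w \<Gamma>"
    and dec: "\<forall>i<length \<Gamma>. \<exists>\<Gamma>i. \<Gamma>i \<subseteq> G' \<and> finite \<Gamma>i \<and> \<Gamma> ! i = zsum id \<Gamma>i \<and>
      (\<forall>\<gamma>\<in>\<Gamma>i. csize w \<gamma> \<le> 2 * csize w (\<Gamma> ! i))"
    and z: "z \<in> cycles K"
  shows "chi z \<in> bv.span (chi ` {a\<in>G'. csize w a \<le> 2 * csize w z})"
proof -
  let ?S = "chi ` {a\<in>G'. csize w a \<le> 2 * csize w z}"
  have "chi ` cycles K \<subseteq> bv.span (chi ` set \<Gamma>)"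
    using mcb by (simp add: min_cycle_basis_def cycle_basis_iff)
  then obtain Y where Y: "Y \<subseteq> set \<Gamma>" "chi z = (\<Sum>\<gamma>\<in>Y. chi \<gamma>)"
    using z bv_span_image_eq_subset_sums[of "set \<Gamma>" chi] by auto
  have "chi \<gamma> \<in> bv.span ?S" if "\<gamma> \<in> Y" for \<gamma>
  proof -
    have "\<gamma> \<in> set \<Gamma>"
      using that Y(1) by blast
    then obtain i where i: "i < length \<Gamma>" "\<Gamma> ! i = \<gamma>"
      by (metis in_set_conv_nth)
    then obtain \<Gamma>i where \<Gamma>i: "\<Gamma>i \<subseteq> G'" "finite \<Gamma>i" "\<gamma> = zsum id \<Gamma>i"
      "\<forall>a\<in>\<Gamma>i. csize w a \<le> 2 * csize w \<gamma>"
      using dec by auto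
    have "chi \<gamma> = (\<Sum>a\<in>\<Gamma>i. chi a)"
      using \<Gamma>i(2,3) by (simp add: chi_zsum)
    also have "\<dots> \<in> bv.span ?S"
      using \<Gamma>i(1,4) min_cycle_basis_summand_le[OF mcb z Y that]
      by (intro bv.span_sum bv.span_base) force
    finally show ?thesis .
  qed
  then show ?thesis
    using Y(2) by (simp add: bv.span_sum)
qed

section \<open>Homology bases\<close>

lemma ex_map_eq_if_subset_image:
  assumes "set vs \<subseteq> f ` C"
  shows "\<exists>xs. map f xs = vs \<and> set xs \<subseteq> C"
proof -
  have "map f (map (inv_into C f) vs) = vs"
    using assms by (auto simp: f_inv_into_f intro!: map_idI)
  moreover have "set (map (inv_into C f) vs) \<subseteq> C"
    using assms by (auto intro: inv_into_into)
  ultimately show ?thesis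
    by blast
qed

context
  fixes K :: "'v set set" and bs :: "('v set \<Rightarrow> bit) list"
  assumes bs: "distinct bs" "bv.independent (set bs)" "bv.span (set bs) = chi ` boundaries K"
begin

lemma homology_basis_iff:
  "homology_basis K xs \<longleftrightarrow> set xs \<subseteq> cycles K \<and> distinct (map chi xs @ bs) \<and>
    bv.independent (set (map chi xs @ bs)) \<and> chi ` cycles K \<subseteq> bv.span (set (map chi xs @ bs))"
  unfolding homology_basis_eq_basis_modulo bs(3)[symmetric] basis_modulo_span_iff[OF bs(1,2)]
  by (simp add: inj_image_subset_iff[OF inj_chi])

lemma homology_basis_exists:
  assumes "finite (cycles K)"
  obtains xs where "homology_basis K xs"
proof -
  obtain B where B: "set bs \<subseteq> B" "B \<subseteq> chi ` cycles K \<union> set bs" "bv.independent B"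
    "chi ` cycles K \<union> set bs \<subseteq> bv.span B"
    using bv.maximal_independent_subset_extend[OF _ bs(2), of "chi ` cycles K \<union> set bs"] by blast
  have "finite (B - set bs)"
    using B(2) assms finite_subset by blast
  then obtain vs where vs: "set vs = B - set bs" "distinct vs"
    using finite_distinct_list by blast
  moreover obtain xs where "map chi xs = vs" "set xs \<subseteq> cycles K"
    using ex_map_eq_if_subset_image[of vs chi "cycles K"] vs(1) B(2) by blast
  moreover have "set (vs @ bs) = B"
    using vs(1) B(1) by auto
  ultimately have "homology_basis K xs"
    unfolding homology_basis_iff using bs(1) B(3,4) by auto
  then show ?thesis
    by (rule that)
qed

lemma distinct_if_homology_basis: "homology_basis K xs \<Longrightarrow> distinct xs"
  by (simp add: homology_basis_iff distinct_map)

lemma min_homology_basis_exists_sorted: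
  assumes "finite (cycles K)"
  obtains Cs where "min_homology_basis K w Cs" "sorted (map (csize w) Cs)"
proof -
  let ?H = "{xs. homology_basis K xs}" and ?size = "\<lambda>xs. \<Sum>C\<leftarrow>xs. csize w C"
  have "?H \<subseteq> {xs. set xs \<subseteq> cycles K \<and> length xs \<le> card (cycles K)}"
  proof clarify
    fix xs assume "homology_basis K xs"
    then have "set xs \<subseteq> cycles K" "distinct xs"
      by (simp_all add: homology_basis_iff distinct_if_homology_basis)
    then show "set xs \<subseteq> cycles K \<and> length xs \<le> card (cycles K)"
      using assms by (simp add: card_mono flip: distinct_card)
  qed
  then have "finite (?size ` ?H)"
    using finite_lists_length_le[OF assms] finite_subset by blast
  moreover obtain x where "homology_basis K x"
    using homology_basis_exists[OF assms] .
  ultimately obtain C0 where C0: "homology_basis K C0" "\<And>xs. homology_basis K xs \<Longrightarrow> ?size C0 \<le> ?size xs"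
    using ex_min_if_finite[of "?size ` ?H"] by (auto simp: not_less)
  define Cs where "Cs = sort_key (csize w) C0"
  have "homology_basis K Cs"
    using C0(1) by (simp add: Cs_def homology_basis_iff distinct_map)
  moreover have "?size Cs = ?size C0"
    using distinct_if_homology_basis[OF C0(1)] by (simp add: Cs_def sum_list_distinct_conv_sum_set)
  ultimately have "min_homology_basis K w Cs"
    using C0(2) by (simp add: min_homology_basis_def)
  then show ?thesis
    using that by (simp add: Cs_def)
qed

lemma homology_basis_if_independent:
  assumes Cs: "homology_basis K Cs" and As: "length As = length Cs" "set As \<subseteq> cycles K"
    "distinct (map chi As @ bs)" "bv.independent (set (map chi As @ bs))"
  shows "homology_basis K As"
proof -
  have "distinct (map chi Cs @ bs)" and spanC: "chi ` cycles K \<subseteq> bv.span (set (map chi Cs @ bs))"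
    using Cs by (simp_all add: homology_basis_iff)
  then have "card (set (map chi As @ bs)) = card (set (map chi Cs @ bs))"
    using distinct_card[OF As(3)] As(1) by (simp only: distinct_card length_append length_map)
  moreover have "set (map chi As @ bs) \<subseteq> bv.span (set (map chi Cs @ bs))"
    using As(2) spanC bv.span_superset[of "set (map chi Cs @ bs)"] by auto
  ultimately have "bv.span (set (map chi As @ bs)) = bv.span (set (map chi Cs @ bs))"
    by (intro bv.span_eq_if_independent_card_eq[OF finite_set As(4)])
  then show ?thesis
    unfolding homology_basis_iff using As(2,3,4) spanC by simp
qed

lemma homology_basis_from_short_cycles:
  assumes G': "G' \<subseteq> cycles K"
    and short: "\<And>z. z \<in> cycles K \<Longrightarrow> chi z \<in> bv.span (chi ` {a\<in>G'. csize w a \<le> 2 * csize w z})"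
    and Cs: "homology_basis K Cs" "sorted (map (csize w) Cs)"
  shows "\<exists>As. length As = length Cs \<and> set As \<subseteq> G' \<and> homology_basis K As \<and>
    (\<forall>i<length Cs. csize w (As ! i) \<le> 2 * csize w (Cs ! i))"
proof -
  let ?G = "\<lambda>i. chi ` {a\<in>G'. csize w a \<le> 2 * csize w (Cs ! i)}"
  have C: "set Cs \<subseteq> cycles K" "distinct (map chi Cs @ bs)" "bv.independent (set (map chi Cs @ bs))"
    using Cs(1) by (simp_all add: homology_basis_iff)
  have "?G i \<subseteq> ?G j" if "i \<le> j" "j < length Cs" for i j
    using sorted_nth_mono[OF Cs(2), of i j] that by force
  moreover have "map chi Cs ! i \<in> bv.span (?G i)" if "i < length Cs" for i
  proof -
    have "Cs ! i \<in> cycles K"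
      using C(1) nth_mem[OF that] by blast
    then show ?thesis
      using short that by simp
  qed
  ultimately obtain as where as: "length as = length Cs" "distinct (as @ bs)"
    "bv.independent (set (as @ bs))" "\<forall>i<length Cs. as ! i \<in> ?G i"
    using bv.greedy_independent_selection[OF C(2,3), of ?G] by auto
  have "set as \<subseteq> chi ` G'"
    using as(1,4) by (fastforce simp: in_set_conv_nth)
  then obtain As where As: "map chi As = as" "set As \<subseteq> G'"
    using ex_map_eq_if_subset_image by blast
  have "csize w (As ! i) \<le> 2 * csize w (Cs ! i)" if "i < length Cs" for i
  proof -
    have "chi (As ! i) \<in> ?G i"
      using as(1,4) As(1) that by auto
    then show ?thesis
      by (simp add: inj_image_mem_iff[OF inj_chi])
  qed
  moreover have "homology_basis K As"
    using As as(1-3) G' by (intro homology_basis_if_independent[OF Cs(1)]) auto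
  moreover have "length As = length Cs"
    using As(1) as(1) by auto
  ultimately show ?thesis
    using As(2) by blast
qed

end

lemma finite_triangles: "simplicial_complex2 K \<Longrightarrow> finite (triangles K)"
  by (simp add: simplicial_complex2_def triangles_def)

lemma finite_cycles: "simplicial_complex2 K \<Longrightarrow> finite (cycles K)"
proof -
  assume "simplicial_complex2 K"
  then have "finite (Pow (edges K))"
    by (simp add: simplicial_complex2_def edges_def)
  moreover have "cycles K \<subseteq> Pow (edges K)"
    by (auto simp: cycles_def)
  ultimately show ?thesis
    by (rule finite_subset[rotated])
qed

theorem lemma1:
  fixes K :: "'v set set" and w :: "'v set \<Rightarrow> real" and G' :: "'v set set set"
  assumes "simplicial_complex2 K"
    and "\<forall>e\<in>edges K. 0 \<le> w e"
    and "G' \<subseteq> cycles K"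
    and "\<exists>\<Gamma>. min_cycle_basis K w \<Gamma> \<and>
           (\<forall>i<length \<Gamma>. \<exists>\<Gamma>i. \<Gamma>i \<subseteq> G' \<and> finite \<Gamma>i \<and> \<Gamma> ! i = zsum id \<Gamma>i \<and>
               (\<forall>\<gamma>\<in>\<Gamma>i. csize w \<gamma> \<le> 2 * csize w (\<Gamma> ! i)))"
  shows "\<exists>Cs. min_homology_basis K w Cs \<and>
           (\<exists>As. length As = length Cs \<and> set As \<subseteq> G' \<and> homology_basis K As \<and>
              (\<forall>i<length Cs. csize w (As ! i) \<le> 2 * csize w (Cs ! i)))"
proof -
  obtain \<Gamma> where mcb: "min_cycle_basis K w \<Gamma>"
    and dec: "\<forall>i<length \<Gamma>. \<exists>\<Gamma>i. \<Gamma>i \<subseteq> G' \<and> finite \<Gamma>i \<and> \<Gamma> ! i = zsum id \<Gamma>i \<and>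
      (\<forall>\<gamma>\<in>\<Gamma>i. csize w \<gamma> \<le> 2 * csize w (\<Gamma> ! i))"
    using assms(4) by blast
  obtain bs where bs: "distinct bs" "bv.independent (set bs)" "bv.span (set bs) = chi ` boundaries K"
    using boundary_basis_exists[OF finite_triangles[OF assms(1)]] .
  obtain Cs where Cs: "min_homology_basis K w Cs" "sorted (map (csize w) Cs)"
    using min_homology_basis_exists_sorted[OF bs finite_cycles[OF assms(1)]] .
  then have "homology_basis K Cs"
    by (simp add: min_homology_basis_def)
  then show ?thesis
    using homology_basis_from_short_cycles[OF bs assms(3) cycle_in_span_of_short_cycles[OF mcb dec] _ Cs(2)] Cs(1)
    by blast
qed

end
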